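(* Let $R>0$, $\mathbf{y}_1,\dots,\mathbf{y}_M\in\mathbb{R}^2$, and $\mathcal{N}'(r):=\sum_{l=1}^Mf(|\mathbf{y}_l|,r)$. If $R\le r_1\le r\le r_2$ with $r_2-r_1\le R/2$, then $$\mathcal{N}'(r_1)+\mathcal{N}'(r_2)\ge\mathcal{N}'(r).$$
   Context: For $d\ge0$, $r\ge0$: $f(d,r)=2r/R^2$ if $r\le R-d$; $f(d,r)=0$ if $r>R+d$ or $r<d-R$; $f(d,r)=\frac{2r}{\pi R^2}\arccos\big(\frac{d^2+r^2-R^2}{2dr}\big)$ otherwise. Thus $\mathcal{N}'$ is the derivative of the particle counting function $\mathcal{N}(r)=\sum_l|B_r(0)\cap B_R(\mathbf{y}_l)|/(\pi R^2)$. *)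

theory Defs
  imports "HOL-Analysis.Analysis"
begin

text \<open>Derivative kernel f(d,r) of the particle counting function (R fixed disc radius).\<close>
definition fker :: "real \<Rightarrow> real \<Rightarrow> real \<Rightarrow> real" where
  "fker R d r =
     (if r \<le> R - d then 2 * r / R\<^sup>2
      else if r > R + d \<or> r < d - R then 0
      else 2 * r / (pi * R\<^sup>2) * arccos ((d\<^sup>2 + r\<^sup>2 - R\<^sup>2) / (2 * d * r)))"

definition Nprime :: "real \<Rightarrow> (real^2) list \<Rightarrow> real \<Rightarrow> real" where
  "Nprime R ys r = (\<Sum>y\<leftarrow>ys. fker R (norm y) r)"

end

theory Submission
  imports Defs
begin

text \<open>For \<open>\<rho> \<ge> R\<close> the kernel is \<open>f(d,\<rho>) = 2 \<rho> \<theta>(\<rho>) / (\<pi> R\<^sup>2)\<close>, where \<open>\<theta>(\<rho>) \<in> [0, \<pi>/2]\<close>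
  is the half-angle of the arc of the circle \<open>|x| = \<rho>\<close> inside the disc and
  \<open>4 d sin\<^sup>2(\<theta>(\<rho>)/2)\<close> equals the excess \<open>(R\<^sup>2 - (\<rho> - d)\<^sup>2) / \<rho>\<close>. So it suffices to show
  \<open>r \<theta>(r) \<le> r\<^sub>1 \<theta>(r\<^sub>1) + r\<^sub>2 \<theta>(r\<^sub>2)\<close> for one particle. The excess increases up to the tangent
  radius \<open>s = sqrt (d\<^sup>2 - R\<^sup>2)\<close> and decreases after it. If \<open>s\<^sup>2 \<notin> (r\<^sub>1 r, r r\<^sub>2)\<close>, then \<open>\<theta>(r)\<close>
  is at most \<open>\<theta>\<close> at one endpoint, and a comparison of \<open>\<rho> sin(\<theta>(\<rho>)/2)\<close> or, when \<open>r\<^sub>1\<close> is close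
  to \<open>d\<close>, a polynomial estimate bounding \<open>(r - r\<^sub>1) \<theta>(r)\<close> by \<open>r\<^sub>2 \<theta>(r\<^sub>2)\<close> finishes. Otherwise
  \<open>s \<in> (r\<^sub>1, r\<^sub>2)\<close>, both endpoint excesses are at least \<open>9/16\<close> of the maximum, hence
  \<open>\<theta>(r\<^sub>i) \<ge> 3/5 \<theta>(r)\<close>, and \<open>r\<^sub>1 + r\<^sub>2 \<ge> 5/3 r\<close> concludes. Angles are compared with half-angle
  sines via \<open>2 sin(\<theta>/2) \<le> \<theta> \<le> 5/2 sin(\<theta>/2)\<close> on \<open>[0, \<pi>/2]\<close>.\<close>

lemma mult_cos_le_sin:
  fixes y :: real
  assumes "0 \<le> y" "y \<le> pi"
  shows "y * cos y \<le> sin y"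
proof -
  have "(\<lambda>y. sin y - y * cos y) 0 \<le> (\<lambda>y. sin y - y * cos y) y"
  proof (rule DERIV_nonneg_imp_nondecreasing[OF assms(1)])
    fix x assume "0 \<le> x" "x \<le> y"
    then have "0 \<le> x * sin x"
      using assms by (intro mult_nonneg_nonneg sin_ge_zero) auto
    moreover have "DERIV (\<lambda>y. sin y - y * cos y) x :> x * sin x"
      by (auto intro!: derivative_eq_intros simp: algebra_simps)
    ultimately show "\<exists>z. DERIV (\<lambda>y. sin y - y * cos y) x :> z \<and> 0 \<le> z"
      by blast
  qed
  then show ?thesis by simp
qed

lemma sin_div_antimono:
  fixes a b :: real
  assumes "0 < a" "a \<le> b" "b \<le> pi"
  shows "a * sin b \<le> b * sin a"
proof -
  have "(\<lambda>y. sin y / y) b \<le> (\<lambda>y. sin y / y) a"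
  proof (rule DERIV_nonpos_imp_nonincreasing[OF assms(2)])
    fix x assume x: "a \<le> x" "x \<le> b"
    then have "0 < x" using assms by linarith
    then have "DERIV (\<lambda>y. sin y / y) x :> (x * cos x - sin x) / x\<^sup>2"
      by (auto intro!: derivative_eq_intros simp: field_simps power2_eq_square)
    moreover have "(x * cos x - sin x) / x\<^sup>2 \<le> 0"
      using mult_cos_le_sin[of x] x assms by (intro divide_nonpos_nonneg) auto
    ultimately show "\<exists>z. DERIV (\<lambda>y. sin y / y) x :> z \<and> z \<le> 0" by blast
  qed
  then show ?thesis using assms by (simp add: field_simps)
qed

lemma le_five_halves_sin_half:
  fixes t :: real
  assumes "0 \<le> t" "t \<le> pi / 2"
  shows "t \<le> 5/2 * sin (t / 2)"
proof (cases "t = 0")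
  case False
  have sin_nonneg: "0 \<le> sin (t / 2)"
    using assms by (intro sin_ge_zero) auto
  have "t / 2 * sin (pi / 4) \<le> pi / 4 * sin (t / 2)"
    using assms False by (intro sin_div_antimono) auto
  then have "t * sqrt 2 \<le> pi * sin (t / 2)"
    by (simp add: sin_45 field_simps)
  also have "\<dots> \<le> 7/2 * sin (t / 2)"
    using pi_approx(2) sin_nonneg by (intro mult_right_mono) auto
  also have "\<dots> = 5/2 * sin (t / 2) * (7/5)"
    by simp
  also have "\<dots> \<le> 5/2 * sin (t / 2) * sqrt 2"
    using sin_nonneg by (intro mult_left_mono real_le_rsqrt) (auto simp: power2_eq_square)
  finally show ?thesis by simp
qed simp

lemma mult_le_mult_of_sin_half_le:
  fixes a b x y :: real
  assumes "0 \<le> x" "x \<le> y" "y \<le> pi" "0 \<le> a"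
    and le: "a * sin (x / 2) \<le> b * sin (y / 2)"
  shows "a * x \<le> b * y"
proof (cases "y = 0")
  case False
  then have sin_pos: "0 < sin (y / 2)"
    using assms by (intro sin_gt_zero) auto
  have "a * x * sin (y / 2) \<le> a * (y * sin (x / 2))"
  proof (cases "x = 0")
    case False
    then have "x / 2 * sin (y / 2) \<le> y / 2 * sin (x / 2)"
      using assms by (intro sin_div_antimono) auto
    then show ?thesis
      using \<open>0 \<le> a\<close> by (simp add: mult_left_mono mult.assoc)
  qed (use assms sin_ge_zero[of "x / 2"] in auto)
  also have "\<dots> = y * (a * sin (x / 2))"
    by (simp add: ac_simps)
  also have "\<dots> \<le> y * (b * sin (y / 2))"
    using le assms by (intro mult_left_mono) auto
  finally show ?thesis
    using sin_pos by (simp add: mult.commute mult.left_commute)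
qed (use assms in auto)

lemma one_sub_sq_ge_of_less_add:
  fixes c \<delta> t y z :: real
  assumes "0 < z" "z < y + \<delta>" "z \<le> 11/12" "y\<^sup>2 \<le> 1"
    and "0 \<le> \<delta>" "0 \<le> c" "c \<le> 1 - \<delta>\<^sup>2" "0 \<le> t"
    and "(1 - c) * t\<^sup>2 + 2 * \<delta> * t + \<delta>\<^sup>2 \<le> 1 - c" "c * (1 - t\<^sup>2) \<le> 23/144"
  shows "c * (1 - y\<^sup>2) \<le> 1 - z\<^sup>2"
proof -
  have "c \<le> 1"
    using assms(7) zero_le_power2[of \<delta>] by linarith
  consider "y \<le> 0" | "0 < y" "y \<le> t" | "t < y"
    by linarith
  then show ?thesis
  proof cases
    case 1
    then have "z\<^sup>2 \<le> \<delta>\<^sup>2"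
      using assms by (intro power_mono) auto
    moreover have "c * (1 - y\<^sup>2) \<le> c"
      using assms(6) by (simp add: mult_left_le)
    ultimately show ?thesis
      using assms(7) by linarith
  next
    case 2
    then have "z\<^sup>2 \<le> (y + \<delta>)\<^sup>2"
      using assms by (intro power_mono) auto
    moreover have "(1 - c) * y\<^sup>2 + 2 * \<delta> * y \<le> (1 - c) * t\<^sup>2 + 2 * \<delta> * t"
      using 2 assms \<open>c \<le> 1\<close> by (intro add_mono mult_left_mono power_mono) auto
    ultimately show ?thesis
      using assms(9) by (simp add: power2_sum algebra_simps)
  next
    case 3
    then have "t\<^sup>2 \<le> y\<^sup>2"
      using assms by (intro power_mono) auto
    then have "c * (1 - y\<^sup>2) \<le> c * (1 - t\<^sup>2)"
      using assms(6) by (intro mult_left_mono) auto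
    moreover have "z\<^sup>2 \<le> 121/144"
      using power_mono[of z "11/12" 2] assms by (simp add: power2_eq_square)
    ultimately show ?thesis
      using assms(10) by linarith
  qed
qed

text \<open>Normalised form (\<open>R = 1\<close>, distances measured from \<open>d\<close>) of the estimate that bounds
  \<open>(r - r\<^sub>1) \<theta>(r)\<close> by \<open>r\<^sub>2 \<theta>(r\<^sub>2)\<close> when \<open>r\<^sub>1 - d < 5R/12\<close>.\<close>

lemma one_sub_sq_lower_bound:
  fixes a e z :: real
  assumes "a < 5/12" "0 \<le> e" "e \<le> 1/2" "(a + e)\<^sup>2 \<le> 1" "a + e \<le> z" "z \<le> a + 1/2"
  shows "25/16 * e\<^sup>2 * (1 - (a + e)\<^sup>2) \<le> 1 - z\<^sup>2"
proof -
  define y where "y = a + e"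
  have y: "0 \<le> 1 - y\<^sup>2" "y \<le> z" "z \<le> y + 1/2 - e" "z < 11/12"
    using assms by (auto simp: y_def)
  have e_sq: "e\<^sup>2 \<le> \<epsilon>\<^sup>2" if "e \<le> \<epsilon>" for \<epsilon>
    using assms(2) that by (intro power_mono) auto
  consider "z \<le> 0" | "0 < z" "e \<le> 3/10" | "0 < z" "3/10 < e" "e \<le> 2/5" | "0 < z" "2/5 < e"
    by linarith
  then have "25/16 * e\<^sup>2 * (1 - y\<^sup>2) \<le> 1 - z\<^sup>2"
  proof cases
    case 1
    then have "z\<^sup>2 \<le> y\<^sup>2"
      using y by (subst abs_le_square_iff[symmetric]) auto
    moreover have "25/16 * e\<^sup>2 * (1 - y\<^sup>2) \<le> 1 * (1 - y\<^sup>2)"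
      using e_sq[OF assms(3)] y by (intro mult_right_mono) (auto simp: power2_eq_square)
    ultimately show ?thesis by simp
  next
    case 2
    have "25/16 * e\<^sup>2 * (1 - y\<^sup>2) \<le> 25/16 * (3/10)\<^sup>2 * 1"
      using e_sq[OF 2(2)] y assms(4) by (intro mult_mono) (auto simp: y_def)
    moreover have "z\<^sup>2 \<le> 121/144"
      using power_mono[of z "11/12" 2] 2 y by (simp add: power2_eq_square)
    ultimately show ?thesis by (simp add: power2_eq_square)
  next
    case 3
    have "25/16 * e\<^sup>2 * (1 - y\<^sup>2) \<le> 1/4 * (1 - y\<^sup>2)"
      using e_sq[OF 3(3)] y by (intro mult_right_mono) (auto simp: power2_eq_square)
    also have "\<dots> \<le> 1 - z\<^sup>2"
      using 3 y assms(4)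
      by (intro one_sub_sq_ge_of_less_add[where \<delta> = "1/5" and t = "13/20"])
         (auto simp: y_def power2_eq_square)
    finally show ?thesis .
  next
    case 4
    have "25/16 * e\<^sup>2 * (1 - y\<^sup>2) \<le> 25/64 * (1 - y\<^sup>2)"
      using e_sq[OF assms(3)] y by (intro mult_right_mono) (auto simp: power2_eq_square)
    also have "\<dots> \<le> 1 - z\<^sup>2"
      using 4 y assms(4)
      by (intro one_sub_sq_ge_of_less_add[where \<delta> = "1/10" and t = "4/5"])
         (auto simp: y_def power2_eq_square)
    finally show ?thesis .
  qed
  then show ?thesis
    by (simp add: y_def)
qed

lemma one_sub_sq_lower_bound_scaled:
  fixes R a e z :: real
  assumes "0 < R" "a < 5/12 * R" "0 \<le> e" "e \<le> R / 2" "(a + e)\<^sup>2 \<le> R\<^sup>2" "a + e \<le> z" "z \<le> a + R / 2"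
  shows "25/16 * e\<^sup>2 * (R\<^sup>2 - (a + e)\<^sup>2) \<le> R\<^sup>2 * (R\<^sup>2 - z\<^sup>2)"
proof -
  have "((a + e) / R)\<^sup>2 \<le> 1"
    using assms(1,5) by (simp add: power_divide)
  moreover have "R * (a + e) \<le> R * z"
    using assms by (intro mult_left_mono) auto
  ultimately have "25/16 * (e / R)\<^sup>2 * (1 - (a / R + e / R)\<^sup>2) \<le> 1 - (z / R)\<^sup>2"
    using assms by (intro one_sub_sq_lower_bound) (auto simp: field_simps)
  then have "R ^ 4 * (25/16 * (e / R)\<^sup>2 * (1 - (a / R + e / R)\<^sup>2)) \<le> R ^ 4 * (1 - (z / R)\<^sup>2)"
    by (rule mult_left_mono) simp
  moreover have "R ^ 4 * (25/16 * (e / R)\<^sup>2 * (1 - (a / R + e / R)\<^sup>2))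
      = 25/16 * e\<^sup>2 * (R\<^sup>2 - (a + e)\<^sup>2)"
    using assms(1) by (simp add: field_simps power2_eq_square power4_eq_xxxx)
  moreover have "R ^ 4 * (1 - (z / R)\<^sup>2) = R\<^sup>2 * (R\<^sup>2 - z\<^sup>2)"
    using assms(1) by (simp add: field_simps power2_eq_square power4_eq_xxxx)
  ultimately show ?thesis
    by simp
qed

locale lens =
  fixes R d :: real
  assumes R_pos: "0 < R" and d_pos: "0 < d"
begin

text \<open>\<open>arc_angle \<rho>\<close> is the angle \<open>\<theta>(\<rho>)\<close> of the header for \<open>\<rho> \<ge> R\<close>: the circle meets the disc
  iff \<open>excess \<rho> \<ge> 0\<close>, and then \<open>cos \<theta>(\<rho>) = 1 - excess \<rho> / (2 d)\<close> by the law of cosines.\<close>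

definition excess :: "real \<Rightarrow> real" where
  "excess \<rho> = (R\<^sup>2 - (\<rho> - d)\<^sup>2) / \<rho>"

definition arc_angle :: "real \<Rightarrow> real" where
  "arc_angle \<rho> = (if excess \<rho> < 0 then 0 else arccos (1 - excess \<rho> / (2 * d)))"

lemma excess_nonneg_iff:
  assumes "0 < \<rho>"
  shows "0 \<le> excess \<rho> \<longleftrightarrow> (\<rho> - d)\<^sup>2 \<le> R\<^sup>2"
  using assms by (simp add: excess_def zero_le_divide_iff)

lemma excess_le:
  assumes "R \<le> \<rho>"
  shows "excess \<rho> \<le> 2 * d"
proof -
  have "R\<^sup>2 \<le> \<rho>\<^sup>2"
    using assms R_pos by (intro power_mono) auto
  moreover have "R\<^sup>2 - (\<rho> - d)\<^sup>2 = R\<^sup>2 - \<rho>\<^sup>2 - d\<^sup>2 + 2 * d * \<rho>"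
    by (simp add: power2_diff)
  ultimately have "R\<^sup>2 - (\<rho> - d)\<^sup>2 \<le> 2 * d * \<rho>"
    using zero_le_power2[of d] by linarith
  then show ?thesis
    using assms R_pos by (simp add: excess_def divide_le_eq mult.commute)
qed

lemma arccos_arg_bounds:
  assumes "R \<le> \<rho>" "0 \<le> excess \<rho>"
  shows "0 \<le> 1 - excess \<rho> / (2 * d)" "1 - excess \<rho> / (2 * d) \<le> 1"
  using excess_le[OF assms(1)] assms(2) d_pos by (auto simp: divide_le_eq)

lemma excess_diff:
  assumes "0 < a" "0 < b"
  shows "excess b - excess a = (b - a) * (d\<^sup>2 - R\<^sup>2 - a * b) / (a * b)"
  using assms by (simp add: excess_def field_simps power2_eq_square)

lemma fker_eq_arc_angle:
  assumes "R \<le> \<rho>"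
  shows "fker R d \<rho> = 2 / (pi * R\<^sup>2) * (\<rho> * arc_angle \<rho>)"
proof -
  have "0 < \<rho>" "\<not> \<rho> \<le> R - d"
    using assms R_pos d_pos by auto
  moreover have "(\<rho> > R + d \<or> \<rho> < d - R) \<longleftrightarrow> excess \<rho> < 0"
    using excess_nonneg_iff[OF \<open>0 < \<rho>\<close>] abs_le_square_iff[of "\<rho> - d" R] R_pos
    by auto
  moreover have "(d\<^sup>2 + \<rho>\<^sup>2 - R\<^sup>2) / (2 * d * \<rho>) = 1 - excess \<rho> / (2 * d)"
    using \<open>0 < \<rho>\<close> d_pos by (simp add: excess_def field_simps power2_eq_square)
  ultimately show ?thesis
    by (simp add: fker_def arc_angle_def)
qed

lemma arc_angle_bounds:
  assumes "R \<le> \<rho>"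
  shows "0 \<le> arc_angle \<rho>" "arc_angle \<rho> \<le> pi / 2"
  using arccos_arg_bounds[OF assms] arccos_le_pi2[of "1 - excess \<rho> / (2 * d)"]
  by (cases "excess \<rho> < 0"; simp add: arc_angle_def arccos_lbound)+

lemma sin_half_arc_angle_sq:
  assumes "R \<le> \<rho>" "0 \<le> excess \<rho>"
  shows "(sin (arc_angle \<rho> / 2))\<^sup>2 = excess \<rho> / (4 * d)"
proof -
  have "cos (arc_angle \<rho>) = 1 - excess \<rho> / (2 * d)"
    using arccos_arg_bounds[OF assms] assms(2) by (simp add: arc_angle_def)
  then have "excess \<rho> = 2 * d * (1 - cos (arc_angle \<rho>))"
    using d_pos by (simp add: field_simps)
  also have "\<dots> = 4 * d * (sin (arc_angle \<rho> / 2))\<^sup>2"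
    using cos_double_sin[of "arc_angle \<rho> / 2"] by simp
  finally show ?thesis
    using d_pos by simp
qed

lemma sin_half_arc_angle_nonneg:
  assumes "R \<le> \<rho>"
  shows "0 \<le> sin (arc_angle \<rho> / 2)"
  using arc_angle_bounds[OF assms] by (intro sin_ge_zero) auto

lemma arc_angle_sin_half_bounds:
  assumes "R \<le> \<rho>"
  shows "2 * sin (arc_angle \<rho> / 2) \<le> arc_angle \<rho>"
    and "arc_angle \<rho> \<le> 5/2 * sin (arc_angle \<rho> / 2)"
  using sin_x_le_x[of "arc_angle \<rho> / 2"] le_five_halves_sin_half[of "arc_angle \<rho>"]
    arc_angle_bounds[OF assms]
  by auto

lemma arc_angle_mono:
  assumes "R \<le> b" "0 \<le> excess a" "excess a \<le> excess b"
  shows "arc_angle a \<le> arc_angle b"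
proof -
  have "0 \<le> 1 - excess b / (2 * d)"
    using arccos_arg_bounds(1)[OF assms(1)] assms(2,3) by simp
  moreover have "1 - excess b / (2 * d) \<le> 1 - excess a / (2 * d)"
    using assms(3) d_pos by (simp add: divide_right_mono)
  moreover have "1 - excess a / (2 * d) \<le> 1"
    using assms(2) d_pos by simp
  ultimately show ?thesis
    using assms by (auto simp: arc_angle_def intro!: arccos_le_arccos)
qed

lemma mult_sin_half_arc_angle_le:
  assumes "R \<le> a" "R \<le> b" "0 \<le> u" "0 < v"
    and "u\<^sup>2 * excess a \<le> v\<^sup>2 * excess b"
  shows "u * sin (arc_angle a / 2) \<le> v * sin (arc_angle b / 2)"
proof (cases "excess a < 0")
  case True
  then show ?thesis
    using sin_half_arc_angle_nonneg[OF assms(2)] assms(4) by (simp add: arc_angle_def)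
next
  case False
  then have "0 \<le> u\<^sup>2 * excess a"
    by simp
  then have "0 \<le> v\<^sup>2 * excess b"
    using assms(5) by linarith
  then have "0 \<le> excess b"
    using assms(4) by (simp add: zero_le_mult_iff)
  have "(u * sin (arc_angle a / 2))\<^sup>2 = u\<^sup>2 * excess a / (4 * d)"
    using sin_half_arc_angle_sq[OF assms(1)] False by (simp add: power_mult_distrib)
  also have "\<dots> \<le> v\<^sup>2 * excess b / (4 * d)"
    using assms(5) d_pos by (simp add: divide_right_mono)
  also have "\<dots> = (v * sin (arc_angle b / 2))\<^sup>2"
    using sin_half_arc_angle_sq[OF assms(2) \<open>0 \<le> excess b\<close>] by (simp add: power_mult_distrib)
  finally show ?thesis
    by (rule power2_le_imp_le) (use sin_half_arc_angle_nonneg[OF assms(2)] assms(4) in simp)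
qed

lemma sq_mult_excess:
  assumes "0 < \<rho>"
  shows "\<rho>\<^sup>2 * excess \<rho> = \<rho> * (R\<^sup>2 - (\<rho> - d)\<^sup>2)"
  using assms by (simp add: excess_def power2_eq_square)

lemma arc_angle_mono_below_tangent:
  assumes "R \<le> a" "a \<le> b" "a * b \<le> d\<^sup>2 - R\<^sup>2"
  shows "arc_angle a \<le> arc_angle b"
proof (cases "excess a < 0")
  case True
  then show ?thesis
    using arc_angle_bounds(1)[of b] assms by (simp add: arc_angle_def)
next
  case False
  have "0 < a" "0 < b"
    using assms R_pos by auto
  then have "0 \<le> excess b - excess a"
    using assms by (auto simp: excess_diff intro!: divide_nonneg_pos mult_nonneg_nonneg)
  then show ?thesis
    using False assms by (intro arc_angle_mono) auto
qed

lemma arc_angle_antimono_above_tangent: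
  assumes "R \<le> a" "a \<le> b" "d\<^sup>2 - R\<^sup>2 \<le> a * b"
  shows "arc_angle b \<le> arc_angle a"
proof (cases "excess b < 0")
  case True
  then show ?thesis
    using arc_angle_bounds(1)[of a] assms by (simp add: arc_angle_def)
next
  case False
  have "0 < a" "0 < b"
    using assms R_pos by auto
  then have "excess b - excess a \<le> 0"
    using assms by (auto simp: excess_diff intro!: divide_nonpos_pos mult_nonneg_nonpos)
  then show ?thesis
    using False assms by (intro arc_angle_mono) auto
qed

lemma mult_arc_angle_antimono_above_tangent:
  assumes "R \<le> a" "a \<le> b" "d\<^sup>2 - R\<^sup>2 \<le> a * b" "5 * R / 12 \<le> a - d"
  shows "b * arc_angle b \<le> a * arc_angle a"
proof -
  have "5/6 * R\<^sup>2 \<le> b * ((b - d) + (a - d))"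
    using mult_mono[of R b "5 * R / 6" "(b - d) + (a - d)"] assms R_pos
    by (simp add: power2_eq_square)
  moreover have "25/144 * R\<^sup>2 \<le> (a - d)\<^sup>2"
    using power_mono[of "5 * R / 12" "a - d" 2] assms R_pos by (simp add: power2_eq_square)
  ultimately have "0 \<le> b * ((b - d) + (a - d)) + (a - d)\<^sup>2 - R\<^sup>2"
    using zero_le_power2[of R] by linarith
  moreover have "a * (R\<^sup>2 - (a - d)\<^sup>2) - b * (R\<^sup>2 - (b - d)\<^sup>2)
      = (b - a) * (b * ((b - d) + (a - d)) + (a - d)\<^sup>2 - R\<^sup>2)"
    by (simp add: power2_eq_square algebra_simps)
  ultimately have "0 \<le> a * (R\<^sup>2 - (a - d)\<^sup>2) - b * (R\<^sup>2 - (b - d)\<^sup>2)"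
    using assms(2) by simp
  then have "b\<^sup>2 * excess b \<le> a\<^sup>2 * excess a"
    using assms R_pos by (simp add: sq_mult_excess)
  moreover have "R \<le> b" "0 < a" "0 < b"
    using assms R_pos by auto
  ultimately have sin_le: "b * sin (arc_angle b / 2) \<le> a * sin (arc_angle a / 2)"
    using assms(1) by (intro mult_sin_half_arc_angle_le) auto
  have angle_le: "arc_angle b \<le> arc_angle a"
    using assms(1-3) by (rule arc_angle_antimono_above_tangent)
  show ?thesis
    by (rule mult_le_mult_of_sin_half_le[OF _ angle_le _ _ sin_le])
      (use arc_angle_bounds[OF \<open>R \<le> b\<close>] arc_angle_bounds[OF assms(1)] \<open>0 < b\<close> in auto)
qed

lemma excess_increment_bound:
  assumes "R \<le> r1" "r1 \<le> r" "r \<le> r2" "r2 - r1 \<le> R / 2" "r1 - d < 5 * R / 12"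
    and "0 \<le> excess r"
  shows "(5/4 * (r - r1))\<^sup>2 * excess r \<le> r2\<^sup>2 * excess r2"
proof -
  have pos: "0 < r" "0 < r2"
    using assms R_pos by auto
  have "(r - d)\<^sup>2 \<le> R\<^sup>2"
    using assms(6) excess_nonneg_iff[OF pos(1)] by simp
  then have bound: "25/16 * (r - r1)\<^sup>2 * (R\<^sup>2 - (r - d)\<^sup>2) \<le> R\<^sup>2 * (R\<^sup>2 - (r2 - d)\<^sup>2)"
    using one_sub_sq_lower_bound_scaled[of R "r1 - d" "r - r1" "r2 - d"] assms R_pos by simp
  moreover have "0 \<le> 25/16 * (r - r1)\<^sup>2 * (R\<^sup>2 - (r - d)\<^sup>2)"
    using \<open>(r - d)\<^sup>2 \<le> R\<^sup>2\<close> by simp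
  ultimately have "0 \<le> R\<^sup>2 - (r2 - d)\<^sup>2"
    using R_pos by (smt (verit) zero_le_mult_iff zero_less_power)
  have "R\<^sup>2 \<le> r * r2"
    using assms R_pos by (simp add: power2_eq_square mult_mono)
  have "(5/4 * (r - r1))\<^sup>2 * excess r = 25/16 * (r - r1)\<^sup>2 * (R\<^sup>2 - (r - d)\<^sup>2) / r"
    unfolding excess_def power_mult_distrib by (simp add: power_divide)
  also have "\<dots> \<le> R\<^sup>2 * (R\<^sup>2 - (r2 - d)\<^sup>2) / r"
    by (rule divide_right_mono[OF bound]) (use pos in simp)
  also have "\<dots> \<le> (r * r2) * (R\<^sup>2 - (r2 - d)\<^sup>2) / r"
    using \<open>R\<^sup>2 \<le> r * r2\<close> \<open>0 \<le> R\<^sup>2 - (r2 - d)\<^sup>2\<close> pos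
    by (intro divide_right_mono mult_right_mono) auto
  also have "\<dots> = r2\<^sup>2 * excess r2"
    using pos by (simp add: sq_mult_excess)
  finally show ?thesis .
qed

lemma mult_arc_angle_increment_le:
  assumes "R \<le> r1" "r1 \<le> r" "r \<le> r2" "r2 - r1 \<le> R / 2" "r1 - d < 5 * R / 12"
  shows "(r - r1) * arc_angle r \<le> r2 * arc_angle r2"
proof (cases "excess r < 0")
  case True
  then show ?thesis
    using arc_angle_bounds(1)[of r2] assms by (simp add: arc_angle_def)
next
  case False
  have "R \<le> r" "R \<le> r2" "0 < r2"
    using assms R_pos by auto
  then have sin_le: "5/4 * (r - r1) * sin (arc_angle r / 2) \<le> r2 * sin (arc_angle r2 / 2)"
    using excess_increment_bound[OF assms] False assms by (intro mult_sin_half_arc_angle_le) auto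
  have "(r - r1) * arc_angle r \<le> (r - r1) * (5/2 * sin (arc_angle r / 2))"
    using arc_angle_sin_half_bounds(2)[OF \<open>R \<le> r\<close>] assms by (intro mult_left_mono) auto
  also have "\<dots> \<le> r2 * (2 * sin (arc_angle r2 / 2))"
    using sin_le by (simp add: algebra_simps)
  also have "\<dots> \<le> r2 * arc_angle r2"
    using arc_angle_sin_half_bounds(1)[OF \<open>R \<le> r2\<close>] \<open>0 < r2\<close> by (intro mult_left_mono) auto
  finally show ?thesis .
qed

lemma excess_eq_tangent:
  assumes "s\<^sup>2 = d\<^sup>2 - R\<^sup>2" "0 < \<rho>"
  shows "excess \<rho> = 2 * (d - s) - (\<rho> - s)\<^sup>2 / \<rho>"
proof -
  have "R\<^sup>2 - (\<rho> - d)\<^sup>2 = 2 * (d - s) * \<rho> - (\<rho> - s)\<^sup>2"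
    using assms(1) by (simp add: power2_diff algebra_simps)
  then show ?thesis
    using assms(2) by (simp add: excess_def diff_divide_distrib)
qed

lemma excess_ge_near_tangent:
  assumes "s\<^sup>2 = d\<^sup>2 - R\<^sup>2" "R \<le> s" "R \<le> \<rho>" "\<bar>\<rho> - s\<bar> \<le> R / 2" "0 < r"
  shows "(3/4)\<^sup>2 * excess r \<le> excess \<rho>"
proof -
  have "0 < \<rho>" "0 < d + s"
    using assms R_pos d_pos by auto
  have R_sq: "R\<^sup>2 = (d - s) * (d + s)"
    using assms(1) by (simp add: power2_eq_square algebra_simps)
  have "R\<^sup>2 \<le> R * s"
    using assms(2) R_pos by (simp add: power2_eq_square)
  moreover have "(s + R / 2)\<^sup>2 = s\<^sup>2 + R * s + R\<^sup>2 / 4"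
    by (simp add: power2_eq_square algebra_simps)
  ultimately have "d\<^sup>2 \<le> (s + R / 2)\<^sup>2"
    using assms(1) zero_le_power2[of R] by linarith
  then have "d \<le> s + R / 2"
    by (rule power2_le_imp_le) (use assms(2) R_pos in auto)
  then have "d + s \<le> 2 * \<rho> + 3 * R / 2"
    using assms(4) by linarith
  moreover have "(\<rho> - s)\<^sup>2 \<le> (R / 2)\<^sup>2"
    using assms(4) R_pos by (subst abs_le_square_iff[symmetric]) auto
  ultimately have "(\<rho> - s)\<^sup>2 * (d + s) \<le> (R / 2)\<^sup>2 * (2 * \<rho> + 3 * R / 2)"
    using \<open>0 < d + s\<close> by (intro mult_mono) auto
  also have "\<dots> \<le> 7/8 * R\<^sup>2 * \<rho>"
    using assms(3) R_pos by (simp add: power2_eq_square algebra_simps)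
  finally have "(\<rho> - s)\<^sup>2 * (d + s) \<le> (7/8 * (d - s) * \<rho>) * (d + s)"
    unfolding R_sq by (simp add: algebra_simps)
  then have "(\<rho> - s)\<^sup>2 \<le> 7/8 * (d - s) * \<rho>"
    using \<open>0 < d + s\<close> by (rule mult_right_le_imp_le)
  then have "(\<rho> - s)\<^sup>2 / \<rho> \<le> 7/8 * (d - s)"
    using \<open>0 < \<rho>\<close> by (simp add: divide_le_eq)
  then have "9/8 * (d - s) \<le> excess \<rho>"
    using excess_eq_tangent[OF assms(1) \<open>0 < \<rho>\<close>] by linarith
  moreover have "excess r \<le> 2 * (d - s)"
    using excess_eq_tangent[OF assms(1,5)] assms(5) by simp
  ultimately show ?thesis
    by (simp add: power_divide)
qed

lemma mult_arc_angle_le_add_near_tangent: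
  assumes "R \<le> r1" "r1 \<le> r" "r \<le> r2" "r2 - r1 \<le> R / 2"
    and "r1 * r < d\<^sup>2 - R\<^sup>2" "d\<^sup>2 - R\<^sup>2 < r * r2"
  shows "r * arc_angle r \<le> r1 * arc_angle r1 + r2 * arc_angle r2"
proof -
  define s where "s = sqrt (d\<^sup>2 - R\<^sup>2)"
  have "R\<^sup>2 \<le> r1 * r" "r1\<^sup>2 \<le> r1 * r" "r * r2 \<le> r2\<^sup>2"
    using assms R_pos by (auto simp: power2_eq_square intro: mult_mono)
  then have "0 \<le> d\<^sup>2 - R\<^sup>2"
    using assms(5) zero_le_power2[of R] by linarith
  then have s_sq: "s\<^sup>2 = d\<^sup>2 - R\<^sup>2" and "0 \<le> s"
    by (simp_all add: s_def)
  have "r1\<^sup>2 < s\<^sup>2" "s\<^sup>2 < r2\<^sup>2"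
    using assms(5,6) \<open>r1\<^sup>2 \<le> r1 * r\<close> \<open>r * r2 \<le> r2\<^sup>2\<close> s_sq by linarith+
  then have "r1 < s" "s < r2"
    using \<open>0 \<le> s\<close> R_pos assms by (auto intro: power2_less_imp_less)
  have sin_half_ge: "3/4 * sin (arc_angle r / 2) \<le> sin (arc_angle \<rho> / 2)"
    if "\<rho> = r1 \<or> \<rho> = r2" for \<rho>
  proof -
    have "R \<le> \<rho>" "\<bar>\<rho> - s\<bar> \<le> R / 2"
      using that assms \<open>r1 < s\<close> \<open>s < r2\<close> by auto
    then have "(3/4)\<^sup>2 * excess r \<le> 1\<^sup>2 * excess \<rho>"
      using excess_ge_near_tangent[OF s_sq] \<open>r1 < s\<close> assms R_pos by simp
    then show ?thesis
      using \<open>R \<le> \<rho>\<close> assms by (intro mult_sin_half_arc_angle_le[where v = 1, simplified]) auto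
  qed
  have angle_ge: "3/2 * sin (arc_angle r / 2) \<le> arc_angle \<rho>" if "\<rho> = r1 \<or> \<rho> = r2" for \<rho>
    using sin_half_ge[OF that] arc_angle_sin_half_bounds(1)[of \<rho>] that assms by auto
  have "r * arc_angle r \<le> r * (5/2 * sin (arc_angle r / 2))"
    using arc_angle_sin_half_bounds(2)[of r] assms R_pos by (intro mult_left_mono) auto
  also have "\<dots> = 3/2 * sin (arc_angle r / 2) * (5/3 * r)"
    by simp
  also have "\<dots> \<le> 3/2 * sin (arc_angle r / 2) * (r1 + r2)"
    using sin_half_arc_angle_nonneg[of r] assms by (intro mult_left_mono) auto
  also have "\<dots> = r1 * (3/2 * sin (arc_angle r / 2)) + r2 * (3/2 * sin (arc_angle r / 2))"
    by (simp add: algebra_simps)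
  also have "\<dots> \<le> r1 * arc_angle r1 + r2 * arc_angle r2"
    using angle_ge[of r1] angle_ge[of r2] assms R_pos by (intro add_mono mult_left_mono) auto
  finally show ?thesis .
qed

lemma mult_arc_angle_le_add:
  assumes "R \<le> r1" "r1 \<le> r" "r \<le> r2" "r2 - r1 \<le> R / 2"
  shows "r * arc_angle r \<le> r1 * arc_angle r1 + r2 * arc_angle r2"
proof -
  have nonneg: "0 \<le> \<rho> * arc_angle \<rho>" if "R \<le> \<rho>" for \<rho>
    using arc_angle_bounds(1)[OF that] that R_pos by simp
  consider "r * r2 \<le> d\<^sup>2 - R\<^sup>2" | "d\<^sup>2 - R\<^sup>2 \<le> r1 * r" | "r1 * r < d\<^sup>2 - R\<^sup>2" "d\<^sup>2 - R\<^sup>2 < r * r2"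
    by linarith
  then show ?thesis
  proof cases
    case 1
    then have "r * arc_angle r \<le> r2 * arc_angle r2"
      using arc_angle_mono_below_tangent[of r r2] arc_angle_bounds(1)[of r] assms R_pos
      by (intro mult_mono) auto
    then show ?thesis
      using nonneg[OF assms(1)] by linarith
  next
    case 2
    show ?thesis
    proof (cases "5 * R / 12 \<le> r1 - d")
      case True
      then show ?thesis
        using mult_arc_angle_antimono_above_tangent[OF assms(1,2) 2] nonneg[of r2] assms by linarith
    next
      case False
      have "r1 * arc_angle r \<le> r1 * arc_angle r1"
        using arc_angle_antimono_above_tangent[OF assms(1,2) 2] assms R_pos by (intro mult_left_mono) auto
      moreover have "(r - r1) * arc_angle r \<le> r2 * arc_angle r2"
        using False assms by (intro mult_arc_angle_increment_le) auto
      ultimately show ?thesis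
        by (simp add: algebra_simps)
    qed
  next
    case 3
    with assms show ?thesis
      by (rule mult_arc_angle_le_add_near_tangent)
  qed
qed

end

lemma fker_le_add:
  assumes "0 < R" "0 \<le> d" "R \<le> r1" "r1 \<le> r" "r \<le> r2" "r2 - r1 \<le> R / 2"
  shows "fker R d r \<le> fker R d r1 + fker R d r2"
proof (cases "d = 0")
  case True
  \<comment> \<open>the disc is centred at the origin, so \<open>fker R 0\<close> vanishes beyond \<open>R\<close>\<close>
  then show ?thesis
    using assms by (cases "r = R") (auto simp: fker_def)
next
  case False
  then interpret lens R d
    using assms by unfold_locales auto
  have "2 / (pi * R\<^sup>2) * (r * arc_angle r)
      \<le> 2 / (pi * R\<^sup>2) * (r1 * arc_angle r1 + r2 * arc_angle r2)"
    using mult_arc_angle_le_add[OF assms(3-6)] assms(1) by (intro mult_left_mono) auto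
  then show ?thesis
    using assms by (simp add: fker_eq_arc_angle distrib_left)
qed

theorem lemma4p9:
  fixes R r r1 r2 :: real and ys :: "(real^2) list"
  assumes "R > 0"
    and "R \<le> r1" and "r1 \<le> r" and "r \<le> r2"
    and "r2 - r1 \<le> R / 2"
  shows "Nprime R ys r1 + Nprime R ys r2 \<ge> Nprime R ys r"
  unfolding Nprime_def sum_list_addf[symmetric]
  using fker_le_add[OF assms(1) norm_ge_zero assms(2-5)] by (rule sum_list_mono)

end
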